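(* Let $n$ be a positive integer and $p,q$ primes such that $\binom{n}{k}$ is divisible by $p$ or $q$ for every integer $1\le k\le n-1$. Then for every integer $m\le n$, the multinomial coefficient $\binom{n}{k_1,\dots,k_m}=\frac{n!}{k_1!\cdots k_m!}$ is divisible by $p$ or $q$ whenever $k_1+\cdots+k_m=n$ with $1\le k_i\le n-1$ for all $i$. *)

theory Defs
  imports "HOL-Computational_Algebra.Primes"
begin

text \<open>Multinomial coefficient n!/(k_1! ... k_m!) for a composition k_0,...,k_{m-1} of n
  (indices shifted to 0..m-1).\<close>
definition multinomial :: "nat \<Rightarrow> nat \<Rightarrow> (nat \<Rightarrow> nat) \<Rightarrow> nat" where
  "multinomial n m k = fact n div (\<Prod>i<m. fact (k i))"

end

theory Submission
  imports Defs
begin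

text \<open>Splitting off one part \<open>k\<^sub>i\<close> of the composition factors the multinomial coefficient as
  \<open>n choose k\<^sub>i\<close> times the multinomial coefficient of the remaining parts; so if every proper
  binomial coefficient of \<open>n\<close> is divisible by \<open>p\<close> or \<open>q\<close>, then so is every proper multinomial
  coefficient.\<close>

lemma prod_fact_dvd_fact_sum:
  assumes "finite A"
  shows "(\<Prod>i\<in>A. fact (k i)) dvd (fact (\<Sum>i\<in>A. k i) :: nat)"
  using assms
proof (induction A rule: finite_induct)
  case empty
  then show ?case by simp
next
  case (insert x A)
  have "fact (k x) * (\<Prod>i\<in>A. fact (k i)) dvd fact (k x) * (fact (\<Sum>i\<in>A. k i) :: nat)"
    using insert.IH by (rule mult_dvd_mono[OF dvd_refl])
  also have "\<dots> dvd fact (k x + (\<Sum>i\<in>A. k i))"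
    by (rule fact_fact_dvd_fact)
  finally show ?case
    using insert by simp
qed

lemma binomial_dvd_multinomial:
  assumes "i < m" and "(\<Sum>j<m. k j) = n"
  shows "(n choose k i) dvd multinomial n m k"
proof -
  define A where "A = {..<m} - {i}"
  have split: "{..<m} = insert i A" "i \<notin> A" "finite A"
    using assms(1) by (auto simp: A_def)
  have n_eq: "n = k i + (\<Sum>j\<in>A. k j)"
    using assms(2) split by simp
  obtain r where r: "fact (n - k i) = (\<Prod>j\<in>A. fact (k j)) * (r :: nat)"
    using prod_fact_dvd_fact_sum[OF split(3), of k] n_eq by (auto elim: dvdE)
  have "fact n = fact (k i) * fact (n - k i) * (n choose k i)"
    by (rule binomial_fact_lemma[symmetric]) (use n_eq in simp)
  also have "\<dots> = (\<Prod>j<m. fact (k j)) * (r * (n choose k i))"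
    using r split by (simp add: ac_simps)
  finally have "multinomial n m k = r * (n choose k i)"
    unfolding multinomial_def by simp
  then show ?thesis
    by simp
qed

theorem mainTheorem17:
  fixes n p q :: nat
  assumes "n > 0" and "prime p" and "prime q"
    and "\<forall>k. 1 \<le> k \<and> k \<le> n - 1 \<longrightarrow> p dvd (n choose k) \<or> q dvd (n choose k)"
  shows "\<forall>m (k :: nat \<Rightarrow> nat). m \<le> n \<and> (\<Sum>i<m. k i) = n \<and> (\<forall>i<m. 1 \<le> k i \<and> k i \<le> n - 1)
           \<longrightarrow> p dvd multinomial n m k \<or> q dvd multinomial n m k"
proof (intro allI impI)
  fix m and k :: "nat \<Rightarrow> nat"
  assume h: "m \<le> n \<and> (\<Sum>i<m. k i) = n \<and> (\<forall>i<m. 1 \<le> k i \<and> k i \<le> n - 1)"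
  then have "0 < m"
    using assms(1) by (cases m) auto
  then have "(n choose k 0) dvd multinomial n m k"
    using h by (intro binomial_dvd_multinomial) auto
  moreover have "p dvd (n choose k 0) \<or> q dvd (n choose k 0)"
    using assms(4) h \<open>0 < m\<close> by blast
  ultimately show "p dvd multinomial n m k \<or> q dvd multinomial n m k"
    using dvd_trans by blast
qed

end
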